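(* Let $a$ be real with $|a|>1$, let $x$ be the real solution of $x^{5}+x=a$, and put $y=x/a$. Define the numbers $c_k$ ($k\ge 1$) by $c_1=\tfrac15$ and $c_{k+1}=\dfrac{5k-1}{5(k+1)}\,c_k$ (so that $(1-y)^{1/5}=1-\sum_{k\ge1}c_k y^k$ for $|y|<1$). Define $$K_{0}=1+\sum_{m=1}^{\infty}\frac{(-1)^{m}}{a^{4m}}\sum_{n=0}^{m-1}(-1)^{n}\binom{m-1}{n}c_{4m+n+1},$$ $$K_{1}=-|a|^{4/5}+\sum_{m=1}^{\infty}\frac{(-1)^{m}}{a^{4(m-1)}}\sum_{n=0}^{m-1}(-1)^{n}\binom{m-1}{n}c_{4m+n-3},$$ and for $j=2,3,4$ $$K_{j}=\sum_{m=1}^{\infty}\frac{(-1)^{m}}{a^{4(m-1)}}\sum_{n=0}^{m-1}(-1)^{n}\binom{m-1}{n}c_{4m+n-4+j}.$$ Then these series converge and $y=x/a$ satisfies the quartic equation $$K_{4}y^{4}+K_{3}y^{3}+K_{2}y^{2}+K_{1}y+K_{0}=0 .$$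
   Context: The real solution $x$ of $x^5+x=a$ is unique since $x\mapsto x^5+x$ is strictly increasing; it satisfies $0<x/a<1$. Here $|a|^{4/5}$ denotes the positive real value. The quantities $K_0,\dots,K_4$ (called "ultraradicals" in $a$) are series in $a^{-4}$ obtained by expanding $y=|a|^{-4/5}(1-y)^{1/5}$ binomially and repeatedly replacing $y^{5}$ by $a^{-4}(1-y)$ to eliminate all powers $y^k$, $k\ge5$. *)

theory Defs
  imports Complex_Main
begin

text \<open>Coefficients of (1-y) powr (1/5) = 1 - sum c_k y^k: c_1 = 1/5,
  c_(k+1) = (5k-1)/(5(k+1)) c_k.  The value at index 0 is never used.\<close>
fun ucoef :: "nat \<Rightarrow> real" where
  "ucoef 0 = 0"
| "ucoef (Suc 0) = 1/5"
| "ucoef (Suc (Suc k)) = (5 * real (Suc k) - 1) / (5 * real (Suc (Suc k))) * ucoef (Suc k)"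

definition K0_term :: "real \<Rightarrow> nat \<Rightarrow> real" where
  "K0_term a m = (-1)^m / a^(4*m) *
     (\<Sum>n<m. (-1)^n * real ((m-1) choose n) * ucoef (4*m + n + 1))"

text \<open>m-th term (m \<ge> 1) of the series for K_j, j = 1,2,3,4
  (for j = 1 the index 4m+n-3 = 4m+n-4+j).\<close>
definition Kj_term :: "real \<Rightarrow> nat \<Rightarrow> nat \<Rightarrow> real" where
  "Kj_term a j m = (-1)^m / a^(4*(m-1)) *
     (\<Sum>n<m. (-1)^n * real ((m-1) choose n) * ucoef (4*m + n + j - 4))"

end

theory Submission
  imports Defs "HOL-Analysis.Generalised_Binomial_Theorem"
begin

text \<open>
  The finite alternating sums in the coefficients collapse to generalised binomial
  coefficients: since \<open>(1 - y)^m (1 - y)^(1/5) = (1 - y)^(m + 1/5)\<close>, the sum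
  \<open>\<Sum>n. (-1)^n (m choose n) c_(s+n)\<close> is \<open>\<plusminus>((m + 1/5) gchoose (s + m))\<close>.  Together with
  \<open>y^5 a^4 = 1 - y\<close> this makes the \<open>t\<close>-th term of \<open>\<Sum>j y^j K_j\<close> equal to \<open>(1 - y)^-t\<close> times
  the terms of degrees \<open>5t+1, \<dots>, 5t+5\<close> of the binomial series of \<open>(1 - y)^(t + 1/5)\<close>
  (the last one divided once more by \<open>1 - y\<close>).  Pascal's rule shows that these are exactly
  the differences \<open>E_t - E_(t+1)\<close> of the remainders \<open>E_t\<close> = \<open>(1 - y)^-t\<close> times the tail
  from degree \<open>5t+1\<close> of that series, so the series telescopes to \<open>E_0 = (1 - y)^(1/5) - 1\<close>,
  as \<open>E_t = O(a^(-4t))\<close>.  Finally \<open>|a|^(4/5) y = (1 - y)^(1/5)\<close>.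
\<close>

lemma gbinomial_Suc_rec:
  fixes a :: "'a::field_char_0"
  shows "a gchoose Suc k = (a - of_nat k) / of_nat (Suc k) * (a gchoose k)"
proof -
  have "of_nat (Suc k) * (a gchoose Suc k) = (a - of_nat k) * (a gchoose k)"
    using gbinomial_mult_1[of a k] by (simp add: algebra_simps)
  then show ?thesis
    by (simp add: field_simps del: of_nat_Suc)
qed

lemma ucoef_eq_gbinomial: "ucoef (Suc k) = (-1)^k * ((1/5::real) gchoose Suc k)"
proof (induction k)
  case 0
  then show ?case by simp
next
  case (Suc k)
  have "ucoef (Suc (Suc k)) = (5 * real (Suc k) - 1) / (5 * real (Suc (Suc k))) * ucoef (Suc k)"
    by simp
  also have "\<dots> = (-1)^Suc k * ((1/5 - real (Suc k)) / real (Suc (Suc k)) * ((1/5::real) gchoose Suc k))"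
    unfolding Suc.IH by (simp add: field_simps)
  also have "\<dots> = (-1)^Suc k * ((1/5::real) gchoose Suc (Suc k))"
    by (simp only: gbinomial_Suc_rec[of "1/5::real" "Suc k"] of_nat_Suc)
  finally show ?case .
qed

lemma sum_alternating_choose_Suc:
  fixes f :: "nat \<Rightarrow> 'a::comm_ring_1"
  shows "(\<Sum>n\<le>Suc m. (-1)^n * of_nat (Suc m choose n) * f n)
       = (\<Sum>n\<le>m. (-1)^n * of_nat (m choose n) * (f n - f (Suc n)))"
proof -
  have shift: "(\<Sum>n\<le>m. (-1)^n * of_nat (m choose n) * f n)
      = f 0 + (\<Sum>n\<le>m. (-1)^Suc n * of_nat (m choose Suc n) * f (Suc n))"
    using sum.atMost_Suc_shift[of "\<lambda>n. (-1)^n * of_nat (m choose n) * f n" m] by (simp add: binomial_eq_0)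
  have "(\<Sum>n\<le>m. (-1)^n * of_nat (m choose n) * (f n - f (Suc n)))
      = (\<Sum>n\<le>m. (-1)^n * of_nat (m choose n) * f n)
        + (\<Sum>n\<le>m. (-1)^Suc n * of_nat (m choose n) * f (Suc n))"
    by (simp add: sum.distrib[symmetric] algebra_simps)
  also have "\<dots> = f 0 + (\<Sum>n\<le>m. (-1)^Suc n * (of_nat (m choose n) + of_nat (m choose Suc n)) * f (Suc n))"
    unfolding shift by (simp add: sum.distrib[symmetric] algebra_simps)
  also have "\<dots> = (\<Sum>n\<le>Suc m. (-1)^n * of_nat (Suc m choose n) * f n)"
    by (subst sum.atMost_Suc_shift) simp
  finally show ?thesis ..
qed

lemma sum_alternating_choose_ucoef:
  assumes "1 \<le> s"
  shows "(\<Sum>n\<le>m. (-1)^n * real (m choose n) * ucoef (s + n))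
       = (-1)^(s - 1) * ((real m + 1/5) gchoose (s + m))"
  using assms
proof (induction m arbitrary: s)
  case 0
  then obtain k where "s = Suc k" by (cases s) auto
  then show ?case by (simp add: ucoef_eq_gbinomial)
next
  case (Suc m)
  have "(\<Sum>n\<le>Suc m. (-1)^n * real (Suc m choose n) * ucoef (s + n))
      = (\<Sum>n\<le>m. (-1)^n * real (m choose n) * ucoef (s + n))
        - (\<Sum>n\<le>m. (-1)^n * real (m choose n) * ucoef (Suc s + n))"
    unfolding sum_alternating_choose_Suc by (simp add: sum_subtractf[symmetric] algebra_simps)
  also have "\<dots> = (-1)^(s - 1) * (((real m + 1/5) gchoose (s + m)) + ((real m + 1/5) gchoose Suc (s + m)))"
    using Suc.IH[of s] Suc.IH[of "Suc s"] Suc.prems by (cases s) (simp_all add: algebra_simps)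
  also have "\<dots> = (-1)^(s - 1) * ((real (Suc m) + 1/5) gchoose (s + Suc m))"
    using gbinomial_Suc_Suc[of "real m + 1/5" "s + m"] by (simp add: algebra_simps)
  finally show ?case .
qed

lemma abs_gbinomial_le_choose:
  fixes \<alpha> :: real
  assumes "real n - 1 \<le> \<alpha>" "\<alpha> \<le> real n" "k \<le> n"
  shows "\<bar>\<alpha> gchoose k\<bar> \<le> real (n choose k)"
  using assms(3)
proof (induction k)
  case 0
  then show ?case by simp
next
  case (Suc k)
  have "\<bar>\<alpha> gchoose Suc k\<bar> = \<bar>\<alpha> - real k\<bar> / real (Suc k) * \<bar>\<alpha> gchoose k\<bar>"
    by (simp add: gbinomial_Suc_rec abs_mult)
  also have "\<dots> \<le> (real n - real k) / real (Suc k) * real (n choose k)"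
    using assms Suc by (intro mult_mono divide_right_mono) auto
  also have "\<dots> = real (n choose Suc k)"
    by (simp add: binomial_gbinomial gbinomial_Suc_rec)
  finally show ?case .
qed

lemma abs_gbinomial_le_one:
  fixes \<alpha> :: real
  assumes "real n - 1 \<le> \<alpha>" "\<alpha> \<le> real n" "0 \<le> \<alpha>" "n \<le> k"
  shows "\<bar>\<alpha> gchoose k\<bar> \<le> 1"
proof -
  obtain d where d: "k = n + d"
    using assms(4) le_Suc_ex by blast
  have "\<bar>\<alpha> gchoose (n + d)\<bar> \<le> 1"
  proof (induction d)
    case 0
    show ?case using abs_gbinomial_le_choose[OF assms(1,2), of n] by simp
  next
    case (Suc d)
    have "\<bar>\<alpha> gchoose Suc (n + d)\<bar> = \<bar>\<alpha> - real (n + d)\<bar> / real (Suc (n + d)) * \<bar>\<alpha> gchoose (n + d)\<bar>"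
      by (simp add: gbinomial_Suc_rec abs_mult)
    also have "\<dots> \<le> 1 * 1"
      using assms Suc by (intro mult_mono) (auto simp: field_simps)
    finally show ?case by simp
  qed
  then show ?thesis using d by simp
qed

lemma K0_term_eq_Kj_term: "1 \<le> m \<Longrightarrow> K0_term a m = Kj_term a 5 m / a^4"
proof -
  assume "1 \<le> m"
  then obtain k where m: "m = Suc k"
    by (cases m) auto
  have "4 * Suc k + n + 5 - 4 = 4 * Suc k + n + 1" for n
    by simp
  then show ?thesis
    unfolding K0_term_def Kj_term_def m by (simp add: power_add mult.commute)
qed

lemma Kj_term_Suc:
  assumes "1 \<le> j"
  shows "Kj_term a j (Suc t) = (-1)^(t + j) / a^(4*t) * ((real t + 1/5) gchoose (5*t + j))"
proof -
  obtain i where j: "j = Suc i"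
    using assms by (cases j) auto
  have "(\<Sum>n<Suc t. (-1)^n * real ((Suc t - 1) choose n) * ucoef (4 * Suc t + n + j - 4))
      = (\<Sum>n\<le>t. (-1)^n * real (t choose n) * ucoef ((4*t + j) + n))"
    by (simp add: lessThan_Suc_atMost add.commute add.left_commute)
  also have "\<dots> = (-1)^(4*t + i) * ((real t + 1/5) gchoose (5*t + j))"
    using sum_alternating_choose_ucoef[of "4*t + j" t] j by (simp add: add.commute add.left_commute)
  also have "\<dots> = (-1)^i * ((real t + 1/5) gchoose (5*t + j))"
    by (simp add: power_add power_mult)
  finally show ?thesis
    unfolding Kj_term_def j by (simp add: power_add)
qed

lemma abs_Kj_term_Suc_le:
  assumes "1 \<le> j" "a \<noteq> 0"
  shows "\<bar>Kj_term a j (Suc t)\<bar> \<le> (1/a^4)^t"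
proof -
  have "\<bar>(real t + 1/5) gchoose (5*t + j)\<bar> \<le> 1"
    by (rule abs_gbinomial_le_one[where n = "Suc t"]) (use assms in auto)
  moreover have "\<bar>a^(4*t)\<bar> = (a^4)^t"
    by (simp add: power_mult)
  ultimately show ?thesis
    using assms by (simp add: Kj_term_Suc abs_mult power_abs power_one_over divide_right_mono)
qed

lemma summable_Kj_term:
  assumes "1 \<le> j" "1 < \<bar>a\<bar>"
  shows "summable (\<lambda>t. Kj_term a j (Suc t))"
proof (rule summable_comparison_test')
  have "1 < a^4"
    using assms(2) one_less_power[of "\<bar>a\<bar>" 4] by (simp add: power_even_abs_numeral)
  then show "summable (\<lambda>t. (1/a^4)^t)"
    by (intro summable_geometric) (simp add: divide_less_eq)
  show "norm (Kj_term a j (Suc t)) \<le> (1/a^4)^t" for t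
    using abs_Kj_term_Suc_le[OF assms(1)] assms(2) by force
qed

lemma summable_K0_term:
  assumes "1 < \<bar>a\<bar>"
  shows "summable (\<lambda>t. K0_term a (Suc t))"
  using summable_divide[OF summable_Kj_term[OF _ assms, of 5], of "a^4"]
  by (simp add: K0_term_eq_Kj_term)

definition binomial_term :: "real \<Rightarrow> real \<Rightarrow> nat \<Rightarrow> real" where
  "binomial_term \<alpha> y k = (\<alpha> gchoose k) * (-y)^k"

lemma binomial_term_sums:
  assumes "\<bar>y\<bar> < 1"
  shows "binomial_term \<alpha> y sums (1 - y) powr \<alpha>"
  using gen_binomial_real[of "-y" \<alpha>] assms by (simp add: binomial_term_def[abs_def])

lemma summable_binomial_term_shift:
  "\<bar>y\<bar> < 1 \<Longrightarrow> summable (\<lambda>k. binomial_term \<alpha> y (k + c))"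
  using binomial_term_sums by (simp add: summable_iff_shift sums_iff)

lemma binomial_term_Suc_Suc:
  "binomial_term (\<alpha> + 1) y (Suc k) = binomial_term \<alpha> y (Suc k) - y * binomial_term \<alpha> y k"
  unfolding binomial_term_def gbinomial_Suc_Suc by (simp add: algebra_simps)

lemma suminf_binomial_term_Suc_Suc:
  assumes "\<bar>y\<bar> < 1"
  shows "(\<Sum>k. binomial_term (\<alpha> + 1) y (k + Suc c))
       = (1 - y) * (\<Sum>k. binomial_term \<alpha> y (k + Suc c)) - y * binomial_term \<alpha> y c"
proof -
  note tail = summable_binomial_term_shift[OF assms, of \<alpha> "Suc c"]
  note tail' = summable_binomial_term_shift[OF assms, of \<alpha> c]
  have "(\<Sum>k. binomial_term (\<alpha> + 1) y (k + Suc c))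
      = (\<Sum>k. binomial_term \<alpha> y (k + Suc c) - y * binomial_term \<alpha> y (k + c))"
    by (simp add: binomial_term_Suc_Suc)
  also have "\<dots> = (\<Sum>k. binomial_term \<alpha> y (k + Suc c)) - y * (\<Sum>k. binomial_term \<alpha> y (k + c))"
    using suminf_diff[OF tail summable_mult[OF tail', of y]] suminf_mult[OF tail', of y] by simp
  also have "(\<Sum>k. binomial_term \<alpha> y (k + c)) = binomial_term \<alpha> y c + (\<Sum>k. binomial_term \<alpha> y (k + Suc c))"
    using suminf_split_head[OF tail'] by simp
  finally show ?thesis
    by (simp add: algebra_simps)
qed

lemma abs_suminf_binomial_term_le:
  assumes "0 \<le> y" "y < 1" "real n - 1 \<le> \<alpha>" "\<alpha> \<le> real n" "0 \<le> \<alpha>" "n \<le> c"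
  shows "\<bar>\<Sum>k. binomial_term \<alpha> y (k + c)\<bar> \<le> y^c / (1 - y)"
proof -
  have geom: "(\<lambda>k. y^c * y^k) sums (y^c / (1 - y))"
    using sums_mult[OF geometric_sums[of y], of "y^c"] assms(1,2) by simp
  have le: "\<bar>binomial_term \<alpha> y (k + c)\<bar> \<le> y^c * y^k" for k
  proof -
    have "\<bar>\<alpha> gchoose (k + c)\<bar> \<le> 1"
      using abs_gbinomial_le_one[OF assms(3-5)] assms(6) by simp
    moreover have "0 \<le> y^(k + c)"
      using assms(1) by simp
    ultimately have "y^(k + c) * \<bar>\<alpha> gchoose (k + c)\<bar> \<le> y^(k + c)"
      by (rule mult_left_le)
    then show ?thesis
      using assms(1) by (simp add: binomial_term_def abs_mult power_abs power_add mult.commute)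
  qed
  have geom_summable: "summable (\<lambda>k. y^c * y^k)"
    using geom by (simp add: sums_iff)
  have abs_summable: "summable (\<lambda>k. \<bar>binomial_term \<alpha> y (k + c)\<bar>)"
    by (rule summable_comparison_test'[OF geom_summable]) (simp add: le)
  have "\<bar>\<Sum>k. binomial_term \<alpha> y (k + c)\<bar> \<le> (\<Sum>k. \<bar>binomial_term \<alpha> y (k + c)\<bar>)"
    by (rule summable_rabs[OF abs_summable])
  also have "\<dots> \<le> (\<Sum>k. y^c * y^k)"
    by (rule suminf_le[OF le abs_summable geom_summable])
  also have "\<dots> = y^c / (1 - y)"
    using geom by (simp add: sums_iff)
  finally show ?thesis .
qed

definition ultraradical_remainder :: "real \<Rightarrow> nat \<Rightarrow> real" where
  "ultraradical_remainder y t = (\<Sum>k. binomial_term (real t + 1/5) y (k + Suc (5*t))) / (1 - y)^t"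

lemma inverse_power_four_eq:
  fixes a y :: real
  assumes "y < 1" "y^5 * a^4 = 1 - y"
  shows "1 / a^4 = y^5 / (1 - y)"
proof -
  have "a^4 \<noteq> 0"
    using assms by auto
  then show ?thesis
    using assms by (simp add: divide_eq_eq eq_divide_eq mult.commute)
qed

lemma power_Kj_term_Suc:
  fixes a y :: real
  assumes "1 \<le> j" "y < 1" "y^5 * a^4 = 1 - y"
  shows "y^j * Kj_term a j (Suc t) = binomial_term (real t + 1/5) y (5*t + j) / (1 - y)^t"
proof -
  have "1 / a^(4*t) = (1 / a^4)^t"
    by (simp add: power_mult power_one_over)
  then have inv: "1 / a^(4*t) = (y^5)^t / (1 - y)^t"
    by (simp add: inverse_power_four_eq[OF assms(2,3)] power_divide)
  have sign: "(-1::real)^(5*t + j) = (-1)^(t + j)"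
    by (simp add: power_add power_mult)
  have pow: "y^(5*t + j) = (y^5)^t * y^j"
    by (simp add: power_add power_mult)
  have "y^j * Kj_term a j (Suc t) = y^j * ((-1)^(t + j) * (1 / a^(4*t)) * ((real t + 1/5) gchoose (5*t + j)))"
    unfolding Kj_term_Suc[OF assms(1)] by simp
  also have "\<dots> = ((real t + 1/5) gchoose (5*t + j)) * ((-1)^(5*t + j) * y^(5*t + j)) / (1 - y)^t"
    unfolding inv sign pow by (simp add: mult_ac)
  also have "\<dots> = binomial_term (real t + 1/5) y (5*t + j) / (1 - y)^t"
    by (simp add: binomial_term_def power_minus[of y])
  finally show ?thesis .
qed

lemma K0_term_Suc:
  fixes a y :: real
  assumes "y < 1" "y^5 * a^4 = 1 - y"
  shows "K0_term a (Suc t) = binomial_term (real t + 1/5) y (5*t + 5) / (1 - y)^Suc t"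
proof -
  have "K0_term a (Suc t) = Kj_term a 5 (Suc t) * (1 / a^4)"
    by (simp add: K0_term_eq_Kj_term)
  also have "\<dots> = y^5 * Kj_term a 5 (Suc t) / (1 - y)"
    unfolding inverse_power_four_eq[OF assms] by simp
  also have "\<dots> = binomial_term (real t + 1/5) y (5*t + 5) / (1 - y)^t / (1 - y)"
    by (simp only: power_Kj_term_Suc[OF _ assms])
  finally show ?thesis
    by simp
qed

lemma ultraradical_remainder_diff:
  fixes a y :: real
  assumes "0 < y" "y < 1" "y^5 * a^4 = 1 - y"
  shows "ultraradical_remainder y t - ultraradical_remainder y (Suc t)
       = y * Kj_term a 1 (Suc t) + y^2 * Kj_term a 2 (Suc t) + y^3 * Kj_term a 3 (Suc t)
         + y^4 * Kj_term a 4 (Suc t) + K0_term a (Suc t)"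
proof -
  define u where "u = binomial_term (real t + 1/5) y"
  define T where "T = (\<Sum>k. u (k + Suc (5*t + 5)))"
  have y_small: "\<bar>y\<bar> < 1"
    using assms by simp
  have "(\<Sum>k. u (k + Suc (5*t))) = T + (\<Sum>i<5. u (i + Suc (5*t)))"
    using suminf_split_initial_segment[OF summable_binomial_term_shift[OF y_small], of _ "Suc (5*t)" 5]
    by (simp add: u_def T_def algebra_simps)
  also have "(\<Sum>i<5. u (i + Suc (5*t))) = u (5*t + 1) + u (5*t + 2) + u (5*t + 3) + u (5*t + 4) + u (5*t + 5)"
    by (simp add: eval_nat_numeral)
  finally have remainder: "ultraradical_remainder y t
      = (T + u (5*t + 1) + u (5*t + 2) + u (5*t + 3) + u (5*t + 4) + u (5*t + 5)) / (1 - y)^t"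
    by (simp add: ultraradical_remainder_def u_def algebra_simps)
  have "real (Suc t) + 1/5 = (real t + 1/5) + 1"
    by simp
  then have remainder_Suc: "ultraradical_remainder y (Suc t) = ((1 - y) * T - y * u (5*t + 5)) / (1 - y)^Suc t"
    using suminf_binomial_term_Suc_Suc[OF y_small, of "real t + 1/5" "5*t + 5"]
    by (simp add: ultraradical_remainder_def u_def T_def)
  have terms: "y^j * Kj_term a j (Suc t) = u (5*t + j) / (1 - y)^t" if "1 \<le> j" for j
    using power_Kj_term_Suc[OF that assms(2,3)] by (simp add: u_def)
  have term1: "y * Kj_term a 1 (Suc t) = u (5*t + 1) / (1 - y)^t"
    using terms[of 1] by simp
  have term0: "K0_term a (Suc t) = u (5*t + 5) / (1 - y)^Suc t"
    using K0_term_Suc[OF assms(2,3)] by (simp add: u_def)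
  show ?thesis
    unfolding remainder remainder_Suc term1 terms[of 2, simplified] terms[of 3, simplified]
      terms[of 4, simplified] term0
    using assms(2) by (simp add: field_simps)
qed

lemma ultraradical_remainder_0:
  assumes "\<bar>y\<bar> < 1"
  shows "ultraradical_remainder y 0 = (1 - y) powr (1/5) - 1"
  using suminf_split_head[OF sums_summable[OF binomial_term_sums[OF assms]]]
    sums_unique[OF binomial_term_sums[OF assms]]
  by (simp add: ultraradical_remainder_def binomial_term_def)

lemma ultraradical_remainder_tendsto_0:
  fixes a y :: real
  assumes "1 < \<bar>a\<bar>" "0 < y" "y < 1" "y^5 * a^4 = 1 - y"
  shows "ultraradical_remainder y \<longlonglongrightarrow> 0"
proof (rule Lim_null_comparison)
  have "\<bar>ultraradical_remainder y t\<bar> \<le> y / (1 - y) * (1 / a^4)^t" for t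
  proof -
    have tail: "\<bar>\<Sum>k. binomial_term (real t + 1/5) y (k + Suc (5*t))\<bar> \<le> y^Suc (5*t) / (1 - y)"
      using assms by (intro abs_suminf_binomial_term_le[where n = "Suc t"]) auto
    have "\<bar>ultraradical_remainder y t\<bar>
        = \<bar>\<Sum>k. binomial_term (real t + 1/5) y (k + Suc (5*t))\<bar> / (1 - y)^t"
      using assms(3) by (simp add: ultraradical_remainder_def abs_divide)
    also have "\<dots> \<le> y^Suc (5*t) / (1 - y) / (1 - y)^t"
      using assms(3) by (intro divide_right_mono tail) simp
    also have "\<dots> = y / (1 - y) * (y^5 / (1 - y))^t"
      by (simp add: power_mult power_divide)
    finally show ?thesis
      by (simp only: inverse_power_four_eq[OF assms(3,4)])
  qed
  then show "\<forall>\<^sub>F t in sequentially. norm (ultraradical_remainder y t) \<le> y / (1 - y) * (1 / a^4)^t"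
    by simp
  have "1 < a^4"
    using assms(1) one_less_power[of "\<bar>a\<bar>" 4] by (simp add: power_even_abs_numeral)
  then show "(\<lambda>t. y / (1 - y) * (1 / a^4)^t) \<longlonglongrightarrow> 0"
    by (intro tendsto_mult_right_zero LIMSEQ_power_zero) (simp add: divide_less_eq)
qed

lemma ultraradical_series_sums:
  fixes a y :: real
  assumes "1 < \<bar>a\<bar>" "0 < y" "y < 1" "y^5 * a^4 = 1 - y"
  shows "(\<lambda>t. y * Kj_term a 1 (Suc t) + y^2 * Kj_term a 2 (Suc t) + y^3 * Kj_term a 3 (Suc t)
              + y^4 * Kj_term a 4 (Suc t) + K0_term a (Suc t)) sums ((1 - y) powr (1/5) - 1)"
proof -
  have "\<bar>y\<bar> < 1"
    using assms(2,3) by simp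
  then show ?thesis
    using telescope_sums'[OF ultraradical_remainder_tendsto_0[OF assms]]
    by (simp add: ultraradical_remainder_diff[OF assms(2-4)] ultraradical_remainder_0)
qed

lemma quintic_ratio_bounds:
  fixes a x :: real
  assumes "x^5 + x = a" "a \<noteq> 0"
  shows "0 < x / a \<and> x / a < 1"
proof -
  have "x \<noteq> 0"
    using assms by auto
  then have "0 < x^4"
    by simp
  then have pos: "1 < x^4 + 1"
    by linarith
  have "a = x * (x^4 + 1)"
    using assms(1) by (simp add: algebra_simps eval_nat_numeral)
  then have ratio: "x / a = 1 / (x^4 + 1)"
    using \<open>x \<noteq> 0\<close> pos by simp
  have "0 < 1 / (x^4 + 1)"
    using pos by (intro divide_pos_pos) linarith+
  moreover have "1 / (x^4 + 1) < 1"
    using pos by (subst divide_less_eq_1_pos) linarith+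
  ultimately show ?thesis
    unfolding ratio ..
qed

lemma quintic_ratio_eq:
  fixes a x :: real
  assumes "x^5 + x = a" "a \<noteq> 0"
  shows "(x / a)^5 * a^4 = 1 - x / a"
proof -
  have "(x / a)^5 * a^4 = x^5 / a"
    using assms(2) by (simp add: power_divide eval_nat_numeral)
  also have "\<dots> = 1 - x / a"
    using assms by (simp add: field_simps)
  finally show ?thesis .
qed

lemma powr_four_fifths_mult_eq:
  fixes a y :: real
  assumes "0 < y" "y < 1" "y^5 * a^4 = 1 - y"
  shows "\<bar>a\<bar> powr (4/5) * y = (1 - y) powr (1/5)"
proof -
  have "a \<noteq> 0"
    using assms(2,3) by auto
  then have "(\<bar>a\<bar> powr (4/5))^5 = a^4"
    by (simp add: powr_power power_even_abs_numeral)
  then have "(\<bar>a\<bar> powr (4/5) * y)^5 = 1 - y"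
    using assms(3) by (simp add: power_mult_distrib mult.commute)
  then have "root 5 (1 - y) = \<bar>a\<bar> powr (4/5) * y"
    using assms(1) by (intro real_root_pos_unique) simp_all
  then show ?thesis
    using assms(2) by (simp add: root_powr_inverse)
qed

theorem mainTheorem2:
  fixes a x :: real
  assumes ha: "\<bar>a\<bar> > 1"
    and hx: "x^5 + x = a"
  shows "summable (\<lambda>m. K0_term a (m+1))
       \<and> (\<forall>j\<in>{1,2,3,4::nat}. summable (\<lambda>m. Kj_term a j (m+1)))
       \<and> (let y = x / a;
              K0 = 1 + (\<Sum>m. K0_term a (m+1));
              K1 = - (\<bar>a\<bar> powr (4/5)) + (\<Sum>m. Kj_term a 1 (m+1));
              K2 = (\<Sum>m. Kj_term a 2 (m+1));
              K3 = (\<Sum>m. Kj_term a 3 (m+1));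
              K4 = (\<Sum>m. Kj_term a 4 (m+1))
          in K4 * y^4 + K3 * y^3 + K2 * y^2 + K1 * y + K0 = 0)"
proof -
  have "a \<noteq> 0"
    using ha by auto
  define y where "y = x / a"
  have y: "0 < y" "y < 1" and rel: "y^5 * a^4 = 1 - y"
    using quintic_ratio_bounds[OF hx \<open>a \<noteq> 0\<close>] quintic_ratio_eq[OF hx \<open>a \<noteq> 0\<close>]
    by (simp_all add: y_def)
  note K0 = summable_K0_term[OF ha] and Kj = summable_Kj_term[OF _ ha]
  define k where "k j = (\<Sum>t. Kj_term a j (Suc t))" for j
  define k0 where "k0 = (\<Sum>t. K0_term a (Suc t))"
  let ?S = "\<lambda>t. y * Kj_term a 1 (Suc t) + y^2 * Kj_term a 2 (Suc t) + y^3 * Kj_term a 3 (Suc t)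
              + y^4 * Kj_term a 4 (Suc t) + K0_term a (Suc t)"
  have "?S sums (y * k 1 + y^2 * k 2 + y^3 * k 3 + y^4 * k 4 + k0)"
    unfolding k_def k0_def by (intro sums_add sums_mult summable_sums K0 Kj) simp_all
  moreover have "?S sums (\<bar>a\<bar> powr (4/5) * y - 1)"
    using ultraradical_series_sums[OF ha y rel] by (simp add: powr_four_fifths_mult_eq[OF y rel])
  ultimately have "y * k 1 + y^2 * k 2 + y^3 * k 3 + y^4 * k 4 + k0 = \<bar>a\<bar> powr (4/5) * y - 1"
    by (rule sums_unique2)
  then show ?thesis
    using K0 Kj by (simp add: Let_def y_def[symmetric] k_def k0_def algebra_simps)
qed

end
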